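(* Fix $\lambda>1$. There exists $\beta_0>0$ such that for every $\beta\in[0,\beta_0)$ there exists a value $\alpha_0=\alpha_0(\beta)>0$ such that the sequence $\{\alpha_j\}_{j\ge 0}$ generated from $\alpha_{-1}=0$ and this $\alpha_0$ by the recursion below, together with $a_j^*:=\lambda^{-j}\alpha_j$, satisfies $$a_j^*\approx \mathrm{const}(\beta)\cdot\lambda^{-j/3}\quad\text{as } j\to\infty,$$ i.e. there is a constant $C(\beta)>0$ with $a_j^*/(C(\beta)\lambda^{-j/3})\to 1$ as $j\to\infty$.
   Context: The recursion is as follows. For $\beta>0$ and $n\ge 0$: $$\alpha_{n+1}=-\frac{\lambda}{2\beta}\alpha_n+\sqrt{\Big(\frac{\lambda}{2\beta}\alpha_n\Big)^2+\frac{\lambda}{\beta}\big(\lambda^2\alpha_{n-1}^2+\beta\lambda\alpha_{n-1}\alpha_n+\alpha_n\big)}.$$ For $\beta=0$ and $n\ge0$: $\alpha_{n+1}=1+\lambda^2\frac{\alpha_{n-1}^2}{\alpha_n}$. (These recursions arise from seeking self-similar solutions $a_j(t)=a_j^*/(t-t_0)$ of the dyadic system $\frac{da_j}{dt}=\lambda^j a_{j-1}^2-\lambda^{j+1}a_ja_{j+1}+\beta(\lambda^j a_{j-1}a_j-\lambda^{j+1}a_{j+1}^2)$, $j\ge0$, with boundary condition $a_{-1}\equiv 0$; the relation $a_j^*\approx \mathrm{const}\cdot\lambda^{-j/3}$ means the ratio tends to $1$.) *)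

theory Defs
  imports Complex_Main
begin

definition alpha_step :: "real \<Rightarrow> real \<Rightarrow> real \<Rightarrow> real \<Rightarrow> real" where
  "alpha_step lam beta a b =
     (if beta = 0 then 1 + lam^2 * a^2 / b
      else - (lam / (2*beta)) * b
           + sqrt ((lam / (2*beta) * b)^2 + (lam / beta) * (lam^2 * a^2 + beta * lam * a * b + b)))"

text \<open>Shifted sequence: alpha_seq lam beta a0 k = alpha_{k-1}; i.e. alpha_{-1} = 0, alpha_0 = a0.\<close>
fun alpha_seq_shift :: "real \<Rightarrow> real \<Rightarrow> real \<Rightarrow> nat \<Rightarrow> real" where
  "alpha_seq_shift lam beta a0 0 = 0"
| "alpha_seq_shift lam beta a0 (Suc 0) = a0"
| "alpha_seq_shift lam beta a0 (Suc (Suc n)) =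
     alpha_step lam beta (alpha_seq_shift lam beta a0 n) (alpha_seq_shift lam beta a0 (Suc n))"

definition alpha :: "real \<Rightarrow> real \<Rightarrow> real \<Rightarrow> nat \<Rightarrow> real" where
  "alpha lam beta a0 j = alpha_seq_shift lam beta a0 (Suc j)"

end

theory Submission imports Defs "HOL-Analysis.Analysis" begin

(* Put mu = lam powr (2/3), so that mu^3 = lam^2. One step of the recursion solves
   b f + (beta / lam) f^2 = lam^2 a^2 + beta lam a b + b  for f = alpha_(n+1), and growth like mu^j
   balances its leading terms. For small beta an orbit touching the lower edge of the strip
   mu alpha_k <= alpha_(k+1) <= mu alpha_k + 1/mu is pushed strictly above its upper edge at the
   next step, and vice versa. Hence the two edge defects, continuous in alpha_0, change sign in
   alternation on nested intervals of initial values whose orbits stay in the strip up to step n,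
   and compactness gives an alpha_0 whose whole orbit stays in the strip. Along it alpha_j / mu^j
   increases and is bounded, so it tends to some L > 0, and
   lam^-j alpha_j = (alpha_j / mu^j) lam^(-j/3) ~ L lam^(-j/3). *)

lemma alpha_step_pos_and_equation:
  assumes lam: "lam > 0" and beta: "beta \<ge> 0" and a: "a \<ge> 0" and b: "b > 0"
  shows "alpha_step lam beta a b > 0"
    and "b * alpha_step lam beta a b + beta / lam * (alpha_step lam beta a b)^2
           = lam^2 * a^2 + beta * lam * a * b + b"
proof -
  define R where "R = lam^2 * a^2 + beta * lam * a * b + b"
  have R: "R > 0" unfolding R_def using a b beta lam by (intro add_nonneg_pos) auto
  have "alpha_step lam beta a b > 0
      \<and> b * alpha_step lam beta a b + beta / lam * (alpha_step lam beta a b)^2 = R"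
  proof (cases "beta = 0")
    case True
    then show ?thesis
      using b lam a unfolding R_def by (simp add: alpha_step_def field_simps add_pos_nonneg)
  next
    case False
    hence "beta > 0" using beta by simp
    define k where "k = lam / (2 * beta)"
    define D where "D = (k * b)^2 + (lam / beta) * R"
    have k: "k > 0" unfolding k_def using lam \<open>beta > 0\<close> by simp
    have D: "D > (k * b)^2" unfolding D_def using R lam \<open>beta > 0\<close> by simp
    have sqrt_D: "sqrt D > k * b"
      using D k b by (metis abs_of_pos mult_pos_pos real_less_rsqrt real_sqrt_abs)
    have step: "alpha_step lam beta a b = sqrt D - k * b"
      using False unfolding alpha_step_def D_def R_def k_def by (simp add: algebra_simps)
    \<comment> \<open>\<open>sqrt D - k b\<close> is the positive root of the quadratic, because \<open>(beta / lam) (2 k) = 1\<close>.\<close>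
    have "b * (sqrt D - k * b) + beta / lam * (sqrt D - k * b)^2
        = beta / lam * ((sqrt D)^2 - (k * b)^2)
          + (1 - beta / lam * (2 * k)) * (b * (sqrt D - k * b))"
      by (simp add: power2_eq_square algebra_simps)
    also have "\<dots> = R"
      using D lam \<open>beta > 0\<close> unfolding D_def k_def
      by (simp add: order_trans[OF zero_le_power2 less_imp_le])
    finally show ?thesis using step sqrt_D by simp
  qed
  then show "alpha_step lam beta a b > 0"
    and "b * alpha_step lam beta a b + beta / lam * (alpha_step lam beta a b)^2
           = lam^2 * a^2 + beta * lam * a * b + b"
    unfolding R_def by auto
qed

lemma less_of_linear_plus_square_less:
  fixes b c t f :: real
  assumes "c \<ge> 0" "b > 0" "t \<ge> 0" "f \<ge> 0" and "b * t + c * t^2 < b * f + c * f^2"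
  shows "t < f"
proof (rule ccontr)
  assume "\<not> t < f"
  hence "b * f \<le> b * t" and "c * f^2 \<le> c * t^2"
    using assms by (auto intro: mult_left_mono power_mono)
  thus False using assms(5) by linarith
qed

lemma first_zero_of_sign_change:
  fixes g :: "real \<Rightarrow> real"
  assumes "p \<le> q" and cont: "continuous_on {p..q} g" and "g p > 0" "g q \<le> 0"
  shows "\<exists>s\<in>{p..q}. g s = 0 \<and> (\<forall>t\<in>{p..<s}. g t > 0)"
proof -
  define T where "T = {s \<in> {p..q}. g s \<le> (\<lambda>_. 0) s}"
  have "closed T"
    unfolding T_def
    by (rule continuous_on_closed_Collect_le[OF cont]) (auto intro: continuous_intros)
  moreover have "T \<noteq> {}" and bdd: "bdd_below T"
    using assms unfolding T_def by (auto intro: bdd_belowI[of _ p])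
  ultimately have "Inf T \<in> T" by (rule closed_contains_Inf[rotated -1])
  define s where "s = Inf T"
  have s: "s \<in> {p..q}" "g s \<le> 0" using \<open>Inf T \<in> T\<close> unfolding s_def T_def by auto
  have pos: "g t > 0" if "t \<in> {p..<s}" for t
  proof (rule ccontr)
    assume "\<not> g t > 0"
    hence "t \<in> T" using that s unfolding T_def by auto
    thus False using cInf_lower[OF _ bdd] that unfolding s_def by fastforce
  qed
  have "g s = 0"
  proof (rule ccontr)
    assume "g s \<noteq> 0"
    hence "g s < 0" using s by simp
    hence "p < s" using s \<open>g p > 0\<close> by (cases "p = s") auto
    moreover have "continuous_on {p..s} g" using cont s by (auto intro: continuous_on_subset)
    ultimately obtain x where "p \<le> x" "x \<le> s" "g x = 0"
      using IVT2'[of g s 0 p] \<open>g s < 0\<close> \<open>g p > 0\<close> by force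
    moreover have "x \<noteq> s" using \<open>g x = 0\<close> \<open>g s < 0\<close> by auto
    ultimately show False using pos[of x] by auto
  qed
  thus ?thesis using s pos by blast
qed

lemma last_zero_of_sign_change:
  fixes f :: "real \<Rightarrow> real"
  assumes "p \<le> q" and cont: "continuous_on {p..q} f" and "f p \<le> 0" "f q > 0"
  shows "\<exists>s\<in>{p..q}. f s = 0 \<and> (\<forall>t\<in>{s<..q}. f t > 0)"
proof -
  have "continuous_on {p..q} (\<lambda>t. f (p + q - t))"
    by (rule continuous_on_compose2[OF cont]) (auto intro!: continuous_intros)
  then obtain s where s: "s \<in> {p..q}" "f (p + q - s) = 0"
    and pos: "\<And>t. t \<in> {p..<s} \<Longrightarrow> f (p + q - t) > 0"
    using first_zero_of_sign_change[of p q "\<lambda>t. f (p + q - t)"] assms by auto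
  have "f t > 0" if "t \<in> {p + q - s<..q}" for t
    using pos[of "p + q - t"] that by simp
  thus ?thesis using s by (intro bexI[of _ "p + q - s"]) auto
qed

lemma subinterval_between_zeros:
  fixes f g :: "real \<Rightarrow> real"
  assumes "p \<le> q" and cf: "continuous_on {p..q} f" and cg: "continuous_on {p..q} g"
    and sum: "\<And>s. s \<in> {p..q} \<Longrightarrow> f s + g s > 0" and "f p < 0" "g q < 0"
  shows "\<exists>p' q'. p \<le> p' \<and> p' \<le> q' \<and> q' \<le> q \<and> f p' = 0 \<and> g q' = 0
           \<and> (\<forall>s\<in>{p'..q'}. 0 \<le> f s \<and> 0 \<le> g s)"
proof -
  have "g p > 0" using sum[of p] \<open>p \<le> q\<close> \<open>f p < 0\<close> by auto
  then obtain q' where q': "q' \<in> {p..q}" "g q' = 0"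
    and g_pos: "\<And>t. t \<in> {p..<q'} \<Longrightarrow> g t > 0"
    using first_zero_of_sign_change[OF \<open>p \<le> q\<close> cg] assms by auto
  have "f q' > 0" using sum[of q'] q' by simp
  moreover have "continuous_on {p..q'} f" using cf q' by (auto intro: continuous_on_subset)
  ultimately obtain p' where p': "p' \<in> {p..q'}" "f p' = 0"
    and f_pos: "\<And>t. t \<in> {p'<..q'} \<Longrightarrow> f t > 0"
    using last_zero_of_sign_change[of p q' f] q' \<open>f p < 0\<close> by auto
  have "0 \<le> f s \<and> 0 \<le> g s" if "s \<in> {p'..q'}" for s
    using that p' q' f_pos[of s] g_pos[of s]
    by (cases "s = p'"; cases "s = q'") (auto simp: less_imp_le)
  thus ?thesis using p' q' by (intro exI[of _ p'] exI[of _ q']) auto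
qed

lemma scaled_limit_of_affine_growth:
  fixes a :: "nat \<Rightarrow> real"
  assumes mu: "mu > 1" and "a 0 > 0" and "c \<ge> 0"
    and growth: "\<And>k. mu * a k \<le> a (Suc k) \<and> a (Suc k) \<le> mu * a k + c"
  shows "\<exists>L>0. (\<lambda>j. a j / mu^j) \<longlonglongrightarrow> L"
proof -
  define s where "s j = a j / mu^j" for j
  have "s j \<le> s (Suc j)" for j
    using growth[of j] mu unfolding s_def by (simp add: field_simps)
  hence "incseq s" by (simp add: incseq_SucI)
  have step: "s (Suc j) \<le> s j + c / mu^Suc j" for j
    using growth[of j] mu unfolding s_def by (simp add: field_simps)
  have bound: "s j + c / ((mu - 1) * mu^j) \<le> s 0 + c / (mu - 1)" for j
  proof (induction j)
    case (Suc j)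
    have "c / mu^Suc j + c / ((mu - 1) * mu^Suc j) = c / ((mu - 1) * mu^j)"
      using mu by (simp add: field_simps)
    then show ?case using step[of j] Suc by linarith
  qed simp
  have "c / ((mu - 1) * mu^j) \<ge> 0" for j
    using mu \<open>c \<ge> 0\<close> by (intro divide_nonneg_pos mult_pos_pos) auto
  hence "s j \<le> s 0 + c / (mu - 1)" for j using bound[of j] by (smt (verit))
  then obtain L where L: "s \<longlonglongrightarrow> L" "\<And>j. s j \<le> L"
    using incseq_convergent[OF \<open>incseq s\<close>] by metis
  have "L > 0" using L(2)[of 0] \<open>a 0 > 0\<close> unfolding s_def by simp
  thus ?thesis using L(1) unfolding s_def by blast
qed

lemma alpha_0 [simp]: "alpha lam beta x 0 = x"
  and alpha_Suc_0 [simp]: "alpha lam beta x (Suc 0) = alpha_step lam beta 0 x"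
  and alpha_Suc_Suc [simp]: "alpha lam beta x (Suc (Suc n))
      = alpha_step lam beta (alpha lam beta x n) (alpha lam beta x (Suc n))"
  by (simp_all add: alpha_def)

lemma continuous_on_alpha_step:
  assumes "continuous_on S u" "continuous_on S v" "\<And>x. x \<in> S \<Longrightarrow> v x > 0"
  shows "continuous_on S (\<lambda>x. alpha_step lam beta (u x) (v x))"
  using assms unfolding alpha_step_def
  by (cases "beta = 0") (auto intro!: continuous_intros simp: less_imp_neq[symmetric])

lemma alpha_seq_shift_continuous_pos:
  assumes lam: "lam > 0" and beta: "beta \<ge> 0" and S: "S \<subseteq> {0<..}"
  shows "continuous_on S (\<lambda>x. alpha_seq_shift lam beta x n)
    \<and> (\<forall>x\<in>S. alpha_seq_shift lam beta x n \<ge> 0)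
    \<and> continuous_on S (\<lambda>x. alpha_seq_shift lam beta x (Suc n))
    \<and> (\<forall>x\<in>S. alpha_seq_shift lam beta x (Suc n) > 0)"
proof (induction n)
  case 0
  then show ?case using S by (auto intro: continuous_intros)
next
  case (Suc n)
  then show ?case
    using continuous_on_alpha_step[of S "\<lambda>x. alpha_seq_shift lam beta x n"
        "\<lambda>x. alpha_seq_shift lam beta x (Suc n)"]
      alpha_step_pos_and_equation(1)[OF lam beta] by auto
qed

lemma
  assumes "lam > 0" "beta \<ge> 0" "S \<subseteq> {0<..}"
  shows continuous_on_alpha: "continuous_on S (\<lambda>x. alpha lam beta x n)"
    and alpha_pos: "x \<in> S \<Longrightarrow> alpha lam beta x n > 0"
  using alpha_seq_shift_continuous_pos[OF assms] unfolding alpha_def by blast+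

lemma
  assumes lam: "lam > 0" and beta: "beta \<ge> 0" and x: "x > 0"
  shows alpha_one_le_one: "alpha lam beta x 1 \<le> 1"
    and less_alpha_one:
      "m \<ge> 0 \<Longrightarrow> beta / lam * m^2 < x * (1 - m) \<Longrightarrow> m < alpha lam beta x 1"
proof -
  define f where "f = alpha lam beta x 1"
  have f: "f > 0" "x * f + beta / lam * f^2 = x"
    using alpha_step_pos_and_equation[OF lam beta order_refl x] unfolding f_def by simp_all
  show "f \<le> 1"
  proof (rule ccontr)
    assume "\<not> f \<le> 1"
    hence "x < x * f" using x by simp
    moreover have "beta / lam * f^2 \<ge> 0" using beta lam by simp
    ultimately show False using f by linarith
  qed
  assume "m \<ge> 0" "beta / lam * m^2 < x * (1 - m)"
  hence "x * m + beta / lam * m^2 < x * f + beta / lam * f^2"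
    using f by (simp add: algebra_simps)
  thus "m < f"
    using less_of_linear_plus_square_less[of "beta / lam" x m f] beta lam x f \<open>m \<ge> 0\<close> by simp
qed

definition lower_defect :: "real \<Rightarrow> real \<Rightarrow> real \<Rightarrow> nat \<Rightarrow> real \<Rightarrow> real" where
  "lower_defect lam beta mu k x = alpha lam beta x (Suc k) - mu * alpha lam beta x k"

definition upper_defect :: "real \<Rightarrow> real \<Rightarrow> real \<Rightarrow> nat \<Rightarrow> real \<Rightarrow> real" where
  "upper_defect lam beta mu k x = mu * alpha lam beta x k + 1 / mu - alpha lam beta x (Suc k)"

definition in_strip_upto :: "real \<Rightarrow> real \<Rightarrow> real \<Rightarrow> nat \<Rightarrow> real \<Rightarrow> bool" where
  "in_strip_upto lam beta mu n x \<longleftrightarrow>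
     (\<forall>k<n. 0 \<le> lower_defect lam beta mu k x \<and> 0 \<le> upper_defect lam beta mu k x)"

lemma in_strip_upto_Suc:
  "in_strip_upto lam beta mu (Suc n) x \<longleftrightarrow> in_strip_upto lam beta mu n x
     \<and> 0 \<le> lower_defect lam beta mu n x \<and> 0 \<le> upper_defect lam beta mu n x"
  unfolding in_strip_upto_def by (auto simp: less_Suc_eq)

context
  fixes lam beta mu :: real
  assumes lam: "lam > 0" and beta: "beta \<ge> 0" and mu: "mu > 1" and lam_mu: "lam^2 = mu^3"
begin

lemma alpha_step_above_strip:
  assumes a: "a > 0" and b: "b = mu * a"
    and small: "beta * (2 * b + 1 / mu^2) < lam * b * (1 - 1 / mu)"
  shows "mu * b + 1 / mu < alpha_step lam beta a b"
proof -
  define f where "f = alpha_step lam beta a b"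
  define t where "t = mu * b + 1 / mu"
  have "b > 0" using a mu b by simp
  note f = alpha_step_pos_and_equation[OF lam beta less_imp_le[OF a] \<open>b > 0\<close>, folded f_def]
  have "lam^2 * a^2 = mu * b^2" and "beta * lam * a * b = beta / lam * mu^2 * b^2"
    using b lam_mu mu lam by (simp_all add: power2_eq_square power3_eq_cube field_simps)
  hence "b * f + beta / lam * f^2 = mu * b^2 + beta / lam * mu^2 * b^2 + b" using f(2) by simp
  moreover have "b * t + beta / lam * t^2
      = mu * b^2 + b / mu + beta / lam * (mu^2 * b^2 + 2 * b + 1 / mu^2)"
    unfolding t_def using mu by (simp add: power2_eq_square field_simps)
  moreover have "beta / lam * (2 * b + 1 / mu^2) < b * (1 - 1 / mu)"
    using small lam by (simp add: field_simps)
  ultimately have "b * t + beta / lam * t^2 < b * f + beta / lam * f^2"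
    by (simp add: algebra_simps)
  moreover have "t \<ge> 0" unfolding t_def using \<open>b > 0\<close> mu by simp
  ultimately show ?thesis
    using less_of_linear_plus_square_less[of "beta / lam" b t f] beta lam \<open>b > 0\<close> f(1)
    unfolding t_def f_def by simp
qed

lemma alpha_step_below_strip:
  assumes a: "a > 0" and b: "b = mu * a + 1 / mu"
  shows "alpha_step lam beta a b < mu * b"
proof -
  define f where "f = alpha_step lam beta a b"
  have "b > 1 / mu" using a mu b by simp
  moreover have "1 / mu > 0" using mu by simp
  ultimately have "b > 0" by linarith
  note f = alpha_step_pos_and_equation[OF lam beta less_imp_le[OF a] \<open>b > 0\<close>, folded f_def]
  have "mu * a = b - 1 / mu" using b by simp
  moreover have "lam^2 * a^2 = mu * (mu * a)^2"
    and "beta * lam * a * b = beta / lam * mu^2 * b * (mu * a)"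
    using lam_mu lam by (simp_all add: power2_eq_square power3_eq_cube field_simps)
  ultimately have "b * f + beta / lam * f^2
      = mu * (b - 1 / mu)^2 + beta / lam * mu^2 * b * (b - 1 / mu) + b"
    using f(2) by simp
  moreover have "b * (mu * b) + beta / lam * (mu * b)^2
      = mu * (b - 1 / mu)^2 + beta / lam * mu^2 * b * (b - 1 / mu) + b
        + (b - 1 / mu) + beta / lam * mu * b"
    using mu lam by (simp add: power2_eq_square field_simps)
  moreover have "beta / lam * mu * b \<ge> 0" using beta lam mu \<open>b > 0\<close> by simp
  ultimately have "b * f + beta / lam * f^2 < b * (mu * b) + beta / lam * (mu * b)^2"
    using \<open>b > 1 / mu\<close> by linarith
  thus ?thesis
    using less_of_linear_plus_square_less[of "beta / lam" b f "mu * b"] beta lam mu \<open>b > 0\<close> f(1)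
    unfolding f_def by simp
qed

lemma continuous_on_defects:
  assumes "S \<subseteq> {0<..}"
  shows "continuous_on S (lower_defect lam beta mu k)"
    and "continuous_on S (upper_defect lam beta mu k)"
  unfolding lower_defect_def[abs_def] upper_defect_def[abs_def]
  by (intro continuous_intros continuous_on_alpha[OF lam beta assms])+

lemma alpha_ge_initial:
  assumes "x > 0" and "\<forall>k<n. lower_defect lam beta mu k x \<ge> 0"
  shows "x \<le> alpha lam beta x n"
  using assms(2)
proof (induction n)
  case (Suc n)
  have "alpha lam beta x n \<le> mu * alpha lam beta x n"
    using alpha_pos[OF lam beta, of "{x}"] \<open>x > 0\<close> mu by simp
  also have "\<dots> \<le> alpha lam beta x (Suc n)"
    using Suc.prems unfolding lower_defect_def by simp
  finally show ?case using Suc by simp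
qed simp

lemma upper_defect_Suc_neg:
  assumes "x > 0" and "lower_defect lam beta mu n x = 0" and "b = alpha lam beta x (Suc n)"
    and "beta * (2 * b + 1 / mu^2) < lam * b * (1 - 1 / mu)"
  shows "upper_defect lam beta mu (Suc n) x < 0"
proof -
  have "b = mu * alpha lam beta x n" using assms(2,3) unfolding lower_defect_def by simp
  from alpha_step_above_strip[OF alpha_pos[OF lam beta, of "{x}"] this assms(4)]
  show ?thesis using assms(1,3) unfolding upper_defect_def by simp
qed

lemma lower_defect_Suc_neg:
  assumes "x > 0" and "upper_defect lam beta mu n x = 0"
  shows "lower_defect lam beta mu (Suc n) x < 0"
proof -
  have "alpha lam beta x (Suc n) = mu * alpha lam beta x n + 1 / mu"
    using assms(2) unfolding upper_defect_def by simp
  from alpha_step_below_strip[OF alpha_pos[OF lam beta, of "{x}"] this]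
  show ?thesis using assms(1) unfolding lower_defect_def by simp
qed

context
  fixes A B :: real
  assumes A: "A > 0" and "A \<le> B"
    and upper_start: "upper_defect lam beta mu 0 A < 0"
    and lower_start: "lower_defect lam beta mu 0 B < 0"
    and small_beta: "\<And>b. b \<ge> mu * A \<Longrightarrow> beta * (2 * b + 1 / mu^2) < lam * b * (1 - 1 / mu)"
begin

lemma upper_defect_Suc_neg_in_strip:
  assumes "A \<le> x" and "in_strip_upto lam beta mu (Suc n) x"
    and "lower_defect lam beta mu n x = 0"
  shows "upper_defect lam beta mu (Suc n) x < 0"
proof -
  have "A \<le> alpha lam beta x n"
    using alpha_ge_initial[of x n] assms(1,2) A unfolding in_strip_upto_def by auto
  hence "mu * A \<le> alpha lam beta x (Suc n)"
    using assms(3) mu unfolding lower_defect_def by simp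
  thus ?thesis using upper_defect_Suc_neg[OF _ assms(3) refl small_beta] assms(1) A by simp
qed

lemma shooting_nested_intervals:
  "\<exists>p q. A \<le> p \<and> p \<le> q \<and> q \<le> B \<and> (\<forall>s\<in>{p..q}. in_strip_upto lam beta mu n s)
     \<and> (upper_defect lam beta mu n p < 0 \<and> lower_defect lam beta mu n q < 0
        \<or> lower_defect lam beta mu n p < 0 \<and> upper_defect lam beta mu n q < 0)"
proof (induction n)
  case 0
  show ?case using \<open>A \<le> B\<close> upper_start lower_start by (auto simp: in_strip_upto_def)
next
  case (Suc n)
  then obtain p q where pq: "A \<le> p" "p \<le> q" "q \<le> B"
    and strip: "\<forall>s\<in>{p..q}. in_strip_upto lam beta mu n s"
    and ends: "upper_defect lam beta mu n p < 0 \<and> lower_defect lam beta mu n q < 0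
        \<or> lower_defect lam beta mu n p < 0 \<and> upper_defect lam beta mu n q < 0"
    by blast
  have "{p..q} \<subseteq> {0<..}" using pq A by auto
  note cont = continuous_on_defects[OF this]
  have refine: "\<exists>p' q'. p \<le> p' \<and> p' \<le> q' \<and> q' \<le> q \<and> f p' = 0 \<and> g q' = 0
      \<and> (\<forall>s\<in>{p'..q'}. in_strip_upto lam beta mu (Suc n) s)"
    if fg: "{f, g} = {lower_defect lam beta mu n, upper_defect lam beta mu n}"
      and "f p < 0" "g q < 0" for f g
  proof -
    have "continuous_on {p..q} f" "continuous_on {p..q} g" "\<And>s. f s + g s > 0"
      using fg cont mu unfolding doubleton_eq_iff lower_defect_def upper_defect_def by auto
    then obtain p' q' where "p \<le> p'" "p' \<le> q'" "q' \<le> q" "f p' = 0" "g q' = 0"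
      and "\<forall>s\<in>{p'..q'}. 0 \<le> f s \<and> 0 \<le> g s"
      using subinterval_between_zeros[OF pq(2)] \<open>f p < 0\<close> \<open>g q < 0\<close> by metis
    moreover have "\<forall>s\<in>{p'..q'}. 0 \<le> lower_defect lam beta mu n s \<and> 0 \<le> upper_defect lam beta mu n s"
      using calculation(6) fg unfolding doubleton_eq_iff by auto
    ultimately show ?thesis
      using strip by (intro exI[of _ p'] exI[of _ q']) (auto simp: in_strip_upto_Suc)
  qed
  from ends show ?case
  proof
    assume "upper_defect lam beta mu n p < 0 \<and> lower_defect lam beta mu n q < 0"
    then obtain p' q' where sub: "p \<le> p'" "p' \<le> q'" "q' \<le> q"
      and zeros: "upper_defect lam beta mu n p' = 0" "lower_defect lam beta mu n q' = 0"
      and strip': "\<forall>s\<in>{p'..q'}. in_strip_upto lam beta mu (Suc n) s"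
      using refine[of "upper_defect lam beta mu n" "lower_defect lam beta mu n"] by blast
    have "lower_defect lam beta mu (Suc n) p' < 0"
      using lower_defect_Suc_neg[OF _ zeros(1)] pq sub A by simp
    moreover have "upper_defect lam beta mu (Suc n) q' < 0"
      using upper_defect_Suc_neg_in_strip[OF _ _ zeros(2)] strip' pq sub by auto
    ultimately show ?case using pq sub strip' by (intro exI[of _ p'] exI[of _ q']) auto
  next
    assume "lower_defect lam beta mu n p < 0 \<and> upper_defect lam beta mu n q < 0"
    then obtain p' q' where sub: "p \<le> p'" "p' \<le> q'" "q' \<le> q"
      and zeros: "lower_defect lam beta mu n p' = 0" "upper_defect lam beta mu n q' = 0"
      and strip': "\<forall>s\<in>{p'..q'}. in_strip_upto lam beta mu (Suc n) s"
      using refine[of "lower_defect lam beta mu n" "upper_defect lam beta mu n"] by blast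
    have "upper_defect lam beta mu (Suc n) p' < 0"
      using upper_defect_Suc_neg_in_strip[OF _ _ zeros(1)] strip' pq sub by auto
    moreover have "lower_defect lam beta mu (Suc n) q' < 0"
      using lower_defect_Suc_neg[OF _ zeros(2)] pq sub A by simp
    ultimately show ?case using pq sub strip' by (intro exI[of _ p'] exI[of _ q']) auto
  qed
qed

lemma shooting_solution:
  "\<exists>s\<in>{A..B}. \<forall>k. mu * alpha lam beta s k \<le> alpha lam beta s (Suc k)
                    \<and> alpha lam beta s (Suc k) \<le> mu * alpha lam beta s k + 1 / mu"
proof -
  define G where "G k = {s \<in> {A..B}. (\<lambda>_. 0) s \<le> lower_defect lam beta mu k s}
      \<inter> {s \<in> {A..B}. (\<lambda>_. 0) s \<le> upper_defect lam beta mu k s}" for k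
  define F where "F n = {A..B} \<inter> (\<Inter>k\<in>{..<n}. G k)" for n
  have "{A..B} \<subseteq> {0<..}" using A by auto
  note cont = continuous_on_defects[OF this]
  have "closed (G k)" for k
    unfolding G_def
    by (intro closed_Int continuous_on_closed_Collect_le continuous_on_const cont closed_atLeastAtMost)
  hence "compact (F n)" for n unfolding F_def by (intro compact_Int_closed closed_INT) auto
  moreover have "F n \<noteq> {}" for n
    using shooting_nested_intervals[of n] unfolding F_def G_def in_strip_upto_def by fastforce
  moreover have "F n \<subseteq> F m" if "m \<le> n" for m n unfolding F_def using that by auto
  ultimately obtain s where "s \<in> \<Inter>(range F)" using compact_nest[of F] by blast
  hence "s \<in> {A..B}" and "\<And>k. s \<in> G k" unfolding F_def by (fastforce, blast)
  thus ?thesis unfolding G_def lower_defect_def upper_defect_def by (auto intro!: bexI[of _ s])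
qed

end

end

lemma small_beta_escape:
  fixes lam mu A beta b :: real
  assumes "lam > 0" "mu > 1" "A > 0" "0 \<le> beta"
    and "beta < lam * (1 - 1 / mu) / (2 + 1 / (mu^3 * A))" and "b \<ge> mu * A"
  shows "beta * (2 * b + 1 / mu^2) < lam * b * (1 - 1 / mu)"
proof -
  define K where "K = 2 + 1 / (mu^3 * A)"
  have "K > 0" "b > 0"
    unfolding K_def using assms by (auto intro: add_pos_pos less_le_trans[of 0 "mu * A"])
  have "1 / mu^2 \<le> b / (mu^3 * A)"
    using assms by (simp add: field_simps power2_eq_square power3_eq_cube)
  hence "2 * b + 1 / mu^2 \<le> K * b" unfolding K_def using \<open>b > 0\<close> by (simp add: field_simps)
  hence "beta * (2 * b + 1 / mu^2) \<le> beta * (K * b)" using assms(4) by (rule mult_left_mono)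
  also have "\<dots> < lam * (1 - 1 / mu) / K * (K * b)"
    using assms(5) \<open>K > 0\<close> \<open>b > 0\<close> unfolding K_def by (intro mult_strict_right_mono) auto
  also have "\<dots> = lam * b * (1 - 1 / mu)" using \<open>K > 0\<close> by simp
  finally show ?thesis .
qed

lemma strip_solution_for_small_beta:
  assumes lam: "lam > 0" and mu: "mu > 1" and lam_mu: "lam^2 = mu^3"
  shows "\<exists>beta0>0. \<forall>beta. 0 \<le> beta \<and> beta < beta0 \<longrightarrow>
           (\<exists>s>0. \<forall>k. mu * alpha lam beta s k \<le> alpha lam beta s (Suc k)
                      \<and> alpha lam beta s (Suc k) \<le> mu * alpha lam beta s k + 1 / mu)"
proof -
  \<comment> \<open>At \<open>A\<close> the first step overshoots the strip because \<open>alpha_1 \<longrightarrow> 1 > m\<close> as \<open>beta \<longrightarrow> 0\<close>;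
     at \<open>B\<close> it undershoots because \<open>alpha_1 \<le> 1\<close> always.\<close>
  define A where "A = (1 - 1 / mu) / (2 * mu)"
  define B where "B = 2 / mu"
  define m where "m = mu * A + 1 / mu"
  define beta0
    where "beta0 = min (lam * (1 - 1 / mu) / (2 + 1 / (mu^3 * A))) (lam * A * (1 - m) / m^2)"
  have "A > 0" "A \<le> B" unfolding A_def B_def using mu by (simp_all add: field_simps)
  have "2 * m = 1 + 1 / mu" unfolding m_def A_def using mu by (simp add: field_simps)
  moreover have "0 < 1 / mu" "1 / mu < 1" using mu by simp_all
  ultimately have "0 < m" "m < 1" by linarith+
  have "beta0 > 0"
    unfolding beta0_def using lam mu \<open>A > 0\<close> \<open>0 < m\<close> \<open>m < 1\<close> by (simp add: add_pos_pos)
  moreover have "\<exists>s>0. \<forall>k. mu * alpha lam beta s k \<le> alpha lam beta s (Suc k)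
                      \<and> alpha lam beta s (Suc k) \<le> mu * alpha lam beta s k + 1 / mu"
    if beta: "0 \<le> beta" "beta < beta0" for beta
  proof -
    have "beta * m^2 < lam * A * (1 - m)"
      using beta \<open>0 < m\<close> unfolding beta0_def by (simp add: field_simps)
    hence "beta / lam * m^2 < A * (1 - m)" using lam by (simp add: field_simps)
    hence "upper_defect lam beta mu 0 A < 0"
      using less_alpha_one[OF lam beta(1) \<open>A > 0\<close>] \<open>0 < m\<close> unfolding upper_defect_def m_def by simp
    moreover have "lower_defect lam beta mu 0 B < 0"
      using alpha_one_le_one[OF lam beta(1), of B] mu unfolding lower_defect_def B_def by simp
    moreover have "beta * (2 * b + 1 / mu^2) < lam * b * (1 - 1 / mu)" if "b \<ge> mu * A" for b
      using small_beta_escape[OF lam mu \<open>A > 0\<close> beta(1) _ that] beta(2) unfolding beta0_def by simp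
    ultimately obtain s where "s \<in> {A..B}"
      "\<forall>k. mu * alpha lam beta s k \<le> alpha lam beta s (Suc k)
         \<and> alpha lam beta s (Suc k) \<le> mu * alpha lam beta s k + 1 / mu"
      using shooting_solution[OF lam beta(1) mu lam_mu \<open>A > 0\<close> \<open>A \<le> B\<close>] by blast
    thus ?thesis using \<open>A > 0\<close> by (intro exI[of _ s]) auto
  qed
  ultimately show ?thesis by blast
qed

lemma powr_two_thirds_power:
  fixes lam :: real
  assumes "lam > 0"
  shows "(lam powr (2 / 3)) ^ n = lam powr (2 / 3 * real n)"
  using powr_power[of lam "2 / 3" n] assms by (simp add: mult.commute)

lemma scaled_ratio_eq:
  fixes lam :: real
  assumes "lam > 0"
  shows "(lam powr (- real j) * a) / (C * lam powr (- real j / 3))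
           = (a / (lam powr (2 / 3)) ^ j) / C"
proof -
  have "lam powr (- real j) = lam powr (- real j / 3) / lam powr (2 / 3 * real j)"
    by (simp add: powr_diff[symmetric])
  thus ?thesis
    using assms by (cases "C = 0") (simp_all add: powr_two_thirds_power field_simps)
qed

theorem theorem1:
  fixes lam :: real
  assumes "lam > 1"
  shows "\<exists>beta0 > 0. \<forall>beta. 0 \<le> beta \<and> beta < beta0 \<longrightarrow>
           (\<exists>a0 > 0. \<exists>C > 0.
              (\<lambda>j. (lam powr (- real j) * alpha lam beta a0 j) / (C * lam powr (- real j / 3)))
                \<longlonglongrightarrow> 1)"
proof -
  define mu where "mu = lam powr (2 / 3)"
  have lam: "lam > 0" and mu: "mu > 1" unfolding mu_def using assms by simp_all
  have "lam^2 = mu^3"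
    unfolding mu_def using powr_two_thirds_power[OF lam, of 3] lam by (simp add: powr_numeral)
  then obtain beta0 where "beta0 > 0" and solution: "\<And>beta. 0 \<le> beta \<Longrightarrow> beta < beta0 \<Longrightarrow>
      \<exists>s>0. \<forall>k. mu * alpha lam beta s k \<le> alpha lam beta s (Suc k)
               \<and> alpha lam beta s (Suc k) \<le> mu * alpha lam beta s k + 1 / mu"
    using strip_solution_for_small_beta[OF lam mu] by blast
  have "\<exists>a0 > 0. \<exists>C > 0.
          (\<lambda>j. (lam powr (- real j) * alpha lam beta a0 j) / (C * lam powr (- real j / 3))) \<longlonglongrightarrow> 1"
    if beta: "0 \<le> beta" "beta < beta0" for beta
  proof -
    obtain s where "s > 0" and "\<And>k. mu * alpha lam beta s k \<le> alpha lam beta s (Suc k)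
        \<and> alpha lam beta s (Suc k) \<le> mu * alpha lam beta s k + 1 / mu"
      using solution[OF beta] by blast
    then obtain L where "L > 0" and L: "(\<lambda>j. alpha lam beta s j / mu^j) \<longlonglongrightarrow> L"
      using scaled_limit_of_affine_growth[OF mu, of "alpha lam beta s" "1 / mu"] mu by auto
    have "(\<lambda>j. (alpha lam beta s j / mu^j) / L) \<longlonglongrightarrow> L / L"
      using \<open>L > 0\<close> by (intro tendsto_divide L tendsto_const) simp
    moreover have "(\<lambda>j. (lam powr (- real j) * alpha lam beta s j) / (L * lam powr (- real j / 3)))
        = (\<lambda>j. (alpha lam beta s j / mu^j) / L)"
      unfolding mu_def by (rule ext) (rule scaled_ratio_eq[OF lam])
    ultimately show ?thesis
      using \<open>s > 0\<close> \<open>L > 0\<close> by (intro exI[of _ s] exI[of _ L] conjI) simp_all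
  qed
  thus ?thesis using \<open>beta0 > 0\<close> by blast
qed

end
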